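(* Every quilt-affine function $g:\mathbb{N}^d\to\mathbb{N}$ (i.e. quilt-affine with nonnegative values) is obliviously-computable.
   Context: A function $g:\mathbb{N}^d\to\mathbb{Z}$ is quilt-affine if it is nondecreasing (componentwise order) and there exist $p\in\mathbb{N}_+$, $\vec{\nabla}\in\mathbb{Q}^d_{\ge0}$ and $B:\mathbb{Z}^d/p\mathbb{Z}^d\to\mathbb{Q}$ with $g(\vec{x})=\vec{\nabla}\cdot\vec{x}+B(\vec{x}\bmod p)$ for all $\vec{x}$, where $\vec{x}\bmod p$ is the class $\{\vec{x}+p\vec{z}:\vec{z}\in\mathbb{Z}^d\}$. A chemical reaction network (CRN) is a pair $(\mathcal{S},\mathcal{R})$ of a finite set of species and a finite set of reactions $(\vec{R},\vec{P})\in\mathbb{N}^{\mathcal{S}}\times\mathbb{N}^{\mathcal{S}}$. A configuration is $\vec{C}\in\mathbb{N}^{\mathcal{S}}$; a reaction is applicable if $\vec{R}\le\vec{C}$ and yields $\vec{C}-\vec{R}+\vec{P}$; reachability is via finite sequences of applicable reactions. To compute $g:\mathbb{N}^d\to\mathbb{N}$ the CRN has input species $X_1,\ldots,X_d$, output species $Y$, leader species $L$; the initial configuration $\vec{I}_{\vec{x}}$ has $\vec{x}(i)$ copies of $X_i$, one $L$, nothing else. $\vec{C}$ is stable if all configurations reachable from it have the same count of $Y$. The CRN stably computes $g$ if for every $\vec{x}$ and every $\vec{C}$ reachable from $\vec{I}_{\vec{x}}$ some stable $\vec{O}$ reachable from $\vec{C}$ has $\vec{O}(Y)=g(\vec{x})$.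 The CRN is output-oblivious if $Y$ is never a reactant; a function is obliviously-computable if stably computed by an output-oblivious CRN. *)

theory Defs
  imports Main "HOL.Rat"
begin

text \<open>Points of N^d are represented as functions nat => nat vanishing outside {..<d}.\<close>
definition vecs :: "nat \<Rightarrow> (nat \<Rightarrow> nat) set" where
  "vecs d = {x. \<forall>i\<ge>d. x i = 0}"

text \<open>Quilt-affine (with values in N). B is a function of the residue class of x mod p,
  represented by the componentwise residue vector.\<close>
definition quilt_affine :: "nat \<Rightarrow> ((nat \<Rightarrow> nat) \<Rightarrow> nat) \<Rightarrow> bool" where
  "quilt_affine d g \<longleftrightarrow>
     (\<forall>x\<in>vecs d. \<forall>y\<in>vecs d. x \<le> y \<longrightarrow> g x \<le> g y) \<and>
     (\<exists>(p::nat) (grad::nat \<Rightarrow> rat) (B::(nat \<Rightarrow> nat) \<Rightarrow> rat).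
        p > 0 \<and> (\<forall>i<d. grad i \<ge> 0) \<and>
        (\<forall>x\<in>vecs d. of_nat (g x) = (\<Sum>i<d. grad i * of_nat (x i)) + B (\<lambda>i. x i mod p)))"

type_synonym config = "nat \<Rightarrow> nat"
type_synonym reaction = "config \<times> config"

definition crn_wf :: "nat set \<Rightarrow> reaction set \<Rightarrow> bool" where
  "crn_wf S R \<longleftrightarrow> finite S \<and> finite R \<and>
     (\<forall>(r, p)\<in>R. \<forall>s. s \<notin> S \<longrightarrow> r s = 0 \<and> p s = 0)"

definition crn_step :: "reaction set \<Rightarrow> config \<Rightarrow> config \<Rightarrow> bool" where
  "crn_step R C C' \<longleftrightarrow> (\<exists>(r, p)\<in>R. r \<le> C \<and> C' = (\<lambda>s. C s - r s + p s))"

definition reachable :: "reaction set \<Rightarrow> config \<Rightarrow> config \<Rightarrow> bool" where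
  "reachable R = (crn_step R)\<^sup>*\<^sup>*"

definition stable :: "reaction set \<Rightarrow> nat \<Rightarrow> config \<Rightarrow> bool" where
  "stable R Y C \<longleftrightarrow> (\<forall>C'. reachable R C C' \<longrightarrow> C' Y = C Y)"

definition init_config :: "nat \<Rightarrow> (nat \<Rightarrow> nat) \<Rightarrow> nat \<Rightarrow> (nat \<Rightarrow> nat) \<Rightarrow> config" where
  "init_config d X L x = (\<lambda>s. (if s = L then 1 else 0) + (\<Sum>i<d. if X i = s then x i else 0))"

definition stably_computes ::
  "nat set \<Rightarrow> reaction set \<Rightarrow> nat \<Rightarrow> (nat \<Rightarrow> nat) \<Rightarrow> nat \<Rightarrow> nat \<Rightarrow> ((nat \<Rightarrow> nat) \<Rightarrow> nat) \<Rightarrow> bool" where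
  "stably_computes S R d X Y L g \<longleftrightarrow>
     crn_wf S R \<and> X ` {..<d} \<subseteq> S \<and> inj_on X {..<d} \<and> Y \<in> S \<and> L \<in> S \<and>
     Y \<notin> X ` {..<d} \<and> L \<notin> X ` {..<d} \<and> Y \<noteq> L \<and>
     (\<forall>x\<in>vecs d. \<forall>C. reachable R (init_config d X L x) C \<longrightarrow>
        (\<exists>D. reachable R C D \<and> stable R Y D \<and> D Y = g x))"

definition output_oblivious :: "reaction set \<Rightarrow> nat \<Rightarrow> bool" where
  "output_oblivious R Y \<longleftrightarrow> (\<forall>(r, p)\<in>R. r Y = 0)"

definition obliviously_computable :: "nat \<Rightarrow> ((nat \<Rightarrow> nat) \<Rightarrow> nat) \<Rightarrow> bool" where
  "obliviously_computable d g \<longleftrightarrow>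
     (\<exists>S R X Y L. output_oblivious R Y \<and> stably_computes S R d X Y L g)"

end

theory Submission
  imports Defs
begin

text \<open>
  A single leader remembers the residue r = c mod p of the input c absorbed so far. Absorbing
  one X_i moves it to the residue of r + e_i and emits g(r + e_i) - g(r) copies of Y. Since g is
  affine up to a p-periodic correction, g(c + e_i) - g(c) = g(r + e_i) - g(r), so after absorbing c
  exactly g(c) copies of Y are present; monotonicity makes each emitted amount nonnegative, so Y
  is only ever produced. Every input is eventually absorbed, after which no reaction applies.
\<close>

definition residue_vecs :: "nat \<Rightarrow> nat \<Rightarrow> (nat \<Rightarrow> nat) set" where
  "residue_vecs d p = {r \<in> vecs d. \<forall>i. r i < p}"

lemma finite_residue_vecs: "finite (residue_vecs d p)"
proof (rule finite_subset)
  show "residue_vecs d p \<subseteq>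
      {r. \<forall>i. (i \<in> {..<d} \<longrightarrow> r i \<in> {..<p}) \<and> (i \<notin> {..<d} \<longrightarrow> r i = 0)}"
    by (auto simp: residue_vecs_def vecs_def)
qed (intro finite_set_of_finite_funs finite_lessThan)

lemma sum_weighted_fun_upd_Suc:
  fixes w :: "nat \<Rightarrow> 'a::comm_semiring_1"
  assumes "i < d"
  shows "(\<Sum>j<d. w j * of_nat ((y(i := Suc (y i))) j)) = (\<Sum>j<d. w j * of_nat (y j)) + w i"
proof -
  have "(\<Sum>j<d. w j * of_nat ((y(i := Suc (y i))) j))
      = (\<Sum>j<d. w j * of_nat (y j) + (if j = i then w i else 0))"
    by (rule sum.cong) (auto simp: algebra_simps)
  also have "\<dots> = (\<Sum>j<d. w j * of_nat (y j)) + w i"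
    using assms by (simp add: sum.distrib)
  finally show ?thesis .
qed

definition fire :: "reaction \<Rightarrow> config \<Rightarrow> config" where
  "fire \<rho> C = (\<lambda>s. C s - fst \<rho> s + snd \<rho> s)"

lemma crn_step_iff: "crn_step R C C' \<longleftrightarrow> (\<exists>\<rho>\<in>R. fst \<rho> \<le> C \<and> C' = fire \<rho> C)"
  unfolding crn_step_def fire_def by (auto intro!: bexI simp: split_def)

lemma reachable_step:
  assumes "crn_step R C C'" and "reachable R C' D"
  shows "reachable R C D"
  using assms unfolding reachable_def by (rule converse_rtranclp_into_rtranclp)

lemma stable_if_terminal:
  assumes "\<And>C'. \<not> crn_step R C C'"
  shows "stable R Y C"
proof -
  have "C' = C" if "reachable R C C'" for C'
    using that assms unfolding reachable_def by (auto elim: converse_rtranclpE)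
  then show ?thesis by (auto simp: stable_def)
qed

locale quilt_affine_crn =
  fixes d :: nat and g :: "(nat \<Rightarrow> nat) \<Rightarrow> nat" and p :: nat
    and grad :: "nat \<Rightarrow> rat" and B :: "(nat \<Rightarrow> nat) \<Rightarrow> rat"
    and code :: "(nat \<Rightarrow> nat) \<Rightarrow> nat"
  assumes mono: "\<And>x y. x \<in> vecs d \<Longrightarrow> y \<in> vecs d \<Longrightarrow> x \<le> y \<Longrightarrow> g x \<le> g y"
    and p_pos: "0 < p"
    and g_eq: "\<And>x. x \<in> vecs d \<Longrightarrow>
      of_nat (g x) = (\<Sum>i<d. grad i * of_nat (x i)) + B (\<lambda>i. x i mod p)"
    and code_inj: "inj_on code (residue_vecs d p)"
begin

definition residue :: "(nat \<Rightarrow> nat) \<Rightarrow> nat \<Rightarrow> nat" where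
  "residue x = (\<lambda>i. x i mod p)"

lemma residue_in_residue_vecs: "x \<in> vecs d \<Longrightarrow> residue x \<in> residue_vecs d p"
  using p_pos by (simp add: residue_def residue_vecs_def vecs_def)

lemma residue_fun_upd_Suc:
  "residue (x(i := Suc (x i))) = residue ((residue x)(i := Suc (residue x i)))"
  by (auto simp: residue_def mod_Suc_eq)

lemma fun_upd_Suc_in_vecs: "x \<in> vecs d \<Longrightarrow> i < d \<Longrightarrow> x(i := Suc (x i)) \<in> vecs d"
  by (simp add: vecs_def)

lemma g_increment:
  assumes x: "x \<in> vecs d" and i: "i < d"
  shows "g (x(i := Suc (x i))) = g x + (g ((residue x)(i := Suc (residue x i))) - g (residue x))"
proof -
  let ?r = "residue x"
  have r: "?r \<in> vecs d"
    using residue_in_residue_vecs[OF x] by (simp add: residue_vecs_def)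
  have same_residue: "(\<lambda>j. ?r j mod p) = (\<lambda>j. x j mod p)"
    "(\<lambda>j. (?r(i := Suc (?r i))) j mod p) = (\<lambda>j. (x(i := Suc (x i))) j mod p)"
    using residue_fun_upd_Suc[of x i] by (auto simp: residue_def fun_eq_iff)
  have "rat_of_nat (g (x(i := Suc (x i))))
      = (\<Sum>j<d. grad j * of_nat (x j)) + grad i + B (\<lambda>j. (x(i := Suc (x i))) j mod p)"
    using g_eq[OF fun_upd_Suc_in_vecs[OF x i]] sum_weighted_fun_upd_Suc[OF i, of grad x] by simp
  moreover have "rat_of_nat (g (?r(i := Suc (?r i))))
      = (\<Sum>j<d. grad j * of_nat (?r j)) + grad i + B (\<lambda>j. (x(i := Suc (x i))) j mod p)"
    using g_eq[OF fun_upd_Suc_in_vecs[OF r i]] sum_weighted_fun_upd_Suc[OF i, of grad ?r]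
      same_residue(2) by simp
  moreover have "rat_of_nat (g ?r) = (\<Sum>j<d. grad j * of_nat (?r j)) + B (\<lambda>j. x j mod p)"
    using g_eq[OF r] same_residue(1) by simp
  ultimately have "rat_of_nat (g (x(i := Suc (x i)))) + of_nat (g ?r)
      = of_nat (g x) + of_nat (g (?r(i := Suc (?r i))))"
    using g_eq[OF x] by simp
  then have "g (x(i := Suc (x i))) + g ?r = g x + g (?r(i := Suc (?r i)))"
    by (metis of_nat_add of_nat_eq_iff)
  moreover have "g ?r \<le> g (?r(i := Suc (?r i)))"
    using mono[OF r fun_upd_Suc_in_vecs[OF r i]] by (simp add: le_fun_def)
  ultimately show ?thesis by simp
qed

text \<open>Species: 0 is Y, 1 is the initial leader L, i + 2 is the input X_i, and
  d + 2 + code r is the leader in residue state r.\<close>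

definition leader :: "(nat \<Rightarrow> nat) \<Rightarrow> nat" where
  "leader r = d + 2 + code r"

lemma leader_neq [simp]:
  "leader r \<noteq> 0" "leader r \<noteq> Suc 0" "0 \<noteq> leader r" "Suc 0 \<noteq> leader r"
  "\<not> leader r < Suc (Suc d)"
  "i < d \<Longrightarrow> leader r \<noteq> Suc (Suc i)" "i < d \<Longrightarrow> Suc (Suc i) \<noteq> leader r"
  by (simp_all add: leader_def)

lemma leader_eq_iff:
  "r \<in> residue_vecs d p \<Longrightarrow> r' \<in> residue_vecs d p \<Longrightarrow> leader r = leader r' \<longleftrightarrow> r = r'"
  using code_inj by (auto simp: leader_def inj_on_def)

definition initial :: "(nat \<Rightarrow> nat) \<Rightarrow> config" where
  "initial x = (\<lambda>s. if s = 1 then 1 else if 2 \<le> s \<and> s < d + 2 then x (s - 2) else 0)"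

definition progress :: "(nat \<Rightarrow> nat) \<Rightarrow> (nat \<Rightarrow> nat) \<Rightarrow> config" where
  "progress x c = (\<lambda>s. if s = 0 then g c else if s = leader (residue c) then 1
      else if 2 \<le> s \<and> s < d + 2 then x (s - 2) - c (s - 2) else 0)"

definition start_reaction :: reaction where
  "start_reaction = ((\<lambda>s. if s = 1 then 1 else 0),
     (\<lambda>s. if s = leader (\<lambda>_. 0) then 1 else if s = 0 then g (\<lambda>_. 0) else 0))"

definition absorb_reaction :: "(nat \<Rightarrow> nat) \<Rightarrow> nat \<Rightarrow> reaction" where
  "absorb_reaction r i = ((\<lambda>s. if s = leader r \<or> s = i + 2 then 1 else 0),
     (\<lambda>s. if s = leader (residue (r(i := Suc (r i)))) then 1
          else if s = 0 then g (r(i := Suc (r i))) - g r else 0))"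

definition reactions :: "reaction set" where
  "reactions = insert start_reaction ((\<lambda>(r, i). absorb_reaction r i) ` (residue_vecs d p \<times> {..<d}))"

definition species :: "nat set" where
  "species = {..<d + 2} \<union> leader ` residue_vecs d p"

lemma start_in_reactions: "start_reaction \<in> reactions"
  by (simp add: reactions_def)

lemma absorb_in_reactions: "c \<in> vecs d \<Longrightarrow> i < d \<Longrightarrow> absorb_reaction (residue c) i \<in> reactions"
  using residue_in_residue_vecs by (force simp: reactions_def)

lemma init_config_eq_initial: "init_config d (\<lambda>i. i + 2) 1 x = initial x"
proof
  fix s
  have "(\<Sum>i<d. if i + 2 = s then x i else 0) = (if 2 \<le> s \<and> s < d + 2 then x (s - 2) else 0)"
  proof (cases "2 \<le> s \<and> s < d + 2")
    case True
    then have "(\<Sum>i<d. if i + 2 = s then x i else 0) = (\<Sum>i<d. if i = s - 2 then x i else 0)"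
      by (intro sum.cong) auto
    with True show ?thesis by (simp add: less_diff_conv2)
  next
    case False
    then show ?thesis by (auto intro: sum.neutral)
  qed
  then show "init_config d (\<lambda>i. i + 2) 1 x s = initial x s"
    by (simp add: init_config_def initial_def)
qed

lemma start_fires:
  "fst start_reaction \<le> initial x" "fire start_reaction (initial x) = progress x (\<lambda>_. 0)"
  by (auto simp: start_reaction_def initial_def progress_def fire_def le_fun_def residue_def)

lemma absorb_fires:
  assumes c: "c \<in> vecs d" and i: "i < d" and lt: "c i < x i"
  shows "fst (absorb_reaction (residue c) i) \<le> progress x c"
    and "fire (absorb_reaction (residue c) i) (progress x c) = progress x (c(i := Suc (c i)))"
proof -
  show "fst (absorb_reaction (residue c) i) \<le> progress x c"
    using lt i by (auto simp: absorb_reaction_def progress_def le_fun_def)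
  have next_leader: "residue ((residue c)(i := Suc (residue c i))) = residue (c(i := Suc (c i)))"
    by (rule residue_fun_upd_Suc[symmetric])
  show "fire (absorb_reaction (residue c) i) (progress x c) = progress x (c(i := Suc (c i)))"
    unfolding fire_def absorb_reaction_def progress_def next_leader g_increment[OF c i]
    using i lt by (auto simp: fun_eq_iff)
qed

definition valid_config :: "(nat \<Rightarrow> nat) \<Rightarrow> config \<Rightarrow> bool" where
  "valid_config x C \<longleftrightarrow> C = initial x \<or> (\<exists>c\<in>vecs d. c \<le> x \<and> C = progress x c)"

lemma crn_step_valid_config:
  assumes valid: "valid_config x C" and step: "crn_step reactions C C'"
  shows "valid_config x C'"
proof -
  obtain \<rho> where \<rho>: "\<rho> \<in> reactions" "fst \<rho> \<le> C" and C': "C' = fire \<rho> C"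
    using step by (auto simp: crn_step_iff)
  show ?thesis
  proof (cases "\<rho> = start_reaction")
    case True
    then have "1 \<le> C 1"
      using \<rho>(2) by (auto simp: start_reaction_def le_fun_def dest: spec[of _ 1])
    then have "C = initial x"
      using valid by (auto simp: valid_config_def progress_def)
    then have "C' = progress x (\<lambda>_. 0)"
      using C' True start_fires by simp
    then show ?thesis by (auto simp: valid_config_def vecs_def le_fun_def)
  next
    case False
    then obtain r i where r: "r \<in> residue_vecs d p" and i: "i < d"
      and \<rho>_eq: "\<rho> = absorb_reaction r i"
      using \<rho>(1) by (auto simp: reactions_def)
    have "1 \<le> C (leader r)" "1 \<le> C (i + 2)"
      using \<rho>(2) \<rho>_eq
      by (auto simp: absorb_reaction_def le_fun_def dest: spec[of _ "leader r"] spec[of _ "i + 2"])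
    moreover have "C \<noteq> initial x"
      using \<open>1 \<le> C (leader r)\<close> by (auto simp: initial_def)
    ultimately obtain c where c: "c \<in> vecs d" "c \<le> x" and C: "C = progress x c"
      and "leader r = leader (residue c)" and lt: "c i < x i"
      using valid i by (auto simp: valid_config_def progress_def split: if_splits)
    then have "r = residue c"
      using leader_eq_iff r residue_in_residue_vecs by blast
    then have "C' = progress x (c(i := Suc (c i)))"
      using C' C \<rho>_eq absorb_fires(2)[of c i x, OF c(1) i lt] by simp
    moreover have "c(i := Suc (c i)) \<le> x"
      using c(2) lt by (simp add: le_fun_def)
    ultimately show ?thesis
      using fun_upd_Suc_in_vecs[OF c(1) i] by (auto simp: valid_config_def)
  qed
qed

lemma reachable_valid_config:
  assumes "reachable reactions (initial x) C"
  shows "valid_config x C"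
  using assms unfolding reachable_def
proof (induction rule: rtranclp_induct)
  case base
  then show ?case by (simp add: valid_config_def)
next
  case (step C C')
  then show ?case using crn_step_valid_config by blast
qed

lemma progress_reaches_complete:
  assumes x: "x \<in> vecs d" and c: "c \<in> vecs d" "c \<le> x" and n: "(\<Sum>j<d. x j - c j) = n"
  shows "reachable reactions (progress x c) (progress x x)"
  using c n
proof (induction n arbitrary: c)
  case 0
  then have "x j \<le> c j" if "j < d" for j
    using that by simp
  with 0 x have "c j = x j" for j
    by (cases "j < d") (auto simp: vecs_def le_fun_def intro: antisym)
  then have "c = x" ..
  then show ?case by (simp add: reachable_def)
next
  case (Suc n)
  then obtain i where i: "i < d" and "x i - c i \<noteq> 0"
    by (metis (mono_tags, lifting) lessThan_iff sum.neutral nat.distinct(1))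
  then have lt: "c i < x i"
    by simp
  let ?c' = "c(i := Suc (c i))"
  have "(\<Sum>j<d. x j - c j) = (\<Sum>j<d. (x j - ?c' j) + (if j = i then 1 else 0))"
    using lt by (intro sum.cong) auto
  then have distance: "(\<Sum>j<d. x j - ?c' j) = n"
    using Suc.prems(3) i by (simp add: sum.distrib)
  have "?c' \<le> x"
    using Suc.prems(2) lt by (simp add: le_fun_def)
  then have "reachable reactions (progress x ?c') (progress x x)"
    using Suc.IH[OF fun_upd_Suc_in_vecs[OF Suc.prems(1) i]] distance by blast
  moreover have "crn_step reactions (progress x c) (progress x ?c')"
    unfolding crn_step_iff using absorb_fires[of c i x, OF Suc.prems(1) i lt]
    by (intro bexI[OF _ absorb_in_reactions[OF Suc.prems(1) i]]) simp
  ultimately show ?case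
    using reachable_step by blast
qed

lemma progress_complete_terminal: "\<not> crn_step reactions (progress x x) C'"
proof
  assume "crn_step reactions (progress x x) C'"
  then obtain \<rho> where \<rho>: "\<rho> \<in> reactions" "fst \<rho> \<le> progress x x"
    by (auto simp: crn_step_iff)
  show False
  proof (cases "\<rho> = start_reaction")
    case True
    then show False
      using \<rho>(2) by (auto simp: start_reaction_def progress_def le_fun_def dest: spec[of _ 1])
  next
    case False
    then obtain r i where "i < d" "\<rho> = absorb_reaction r i"
      using \<rho>(1) by (auto simp: reactions_def)
    then show False
      using \<rho>(2) by (auto simp: absorb_reaction_def progress_def le_fun_def dest: spec[of _ "i + 2"])
  qed
qed

lemma crn_wf_reactions: "crn_wf species reactions"
proof -
  have "fst \<rho> s = 0 \<and> snd \<rho> s = 0" if \<rho>: "\<rho> \<in> reactions" and s: "s \<notin> species" for \<rho> s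
  proof -
    have "s \<noteq> 0" "s \<noteq> 1" "\<And>i. i < d \<Longrightarrow> s \<noteq> i + 2"
      "\<And>r. r \<in> residue_vecs d p \<Longrightarrow> s \<noteq> leader r"
      using s by (auto simp: species_def)
    moreover have "residue (r(i := Suc (r i))) \<in> residue_vecs d p"
      if "r \<in> residue_vecs d p" "i < d" for r i
      using that by (intro residue_in_residue_vecs fun_upd_Suc_in_vecs) (simp_all add: residue_vecs_def)
    moreover have "(\<lambda>_. 0) \<in> residue_vecs d p"
      using p_pos by (simp add: residue_vecs_def vecs_def)
    ultimately show ?thesis
      using \<rho> by (auto simp: reactions_def start_reaction_def absorb_reaction_def)
  qed
  moreover have "finite species" "finite reactions"
    using finite_residue_vecs by (simp_all add: species_def reactions_def)
  ultimately show ?thesis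
    unfolding crn_wf_def by fastforce
qed

lemma output_oblivious_reactions: "output_oblivious reactions 0"
  by (auto simp: output_oblivious_def reactions_def start_reaction_def absorb_reaction_def)

lemma reachable_complete:
  assumes x: "x \<in> vecs d" and C: "reachable reactions (initial x) C"
  shows "reachable reactions C (progress x x)"
proof (cases "C = initial x")
  case True
  have "crn_step reactions (initial x) (progress x (\<lambda>_. 0))"
    unfolding crn_step_iff using start_fires by (intro bexI[OF _ start_in_reactions]) simp
  moreover have "reachable reactions (progress x (\<lambda>_. 0)) (progress x x)"
    using progress_reaches_complete[OF x _ _ refl] by (simp add: vecs_def le_fun_def)
  ultimately show ?thesis
    unfolding True by (rule reachable_step)
next
  case False
  then obtain c where "c \<in> vecs d" "c \<le> x" "C = progress x c"
    using reachable_valid_config[OF C] by (auto simp: valid_config_def)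
  then show ?thesis
    using progress_reaches_complete[OF x _ _ refl] by blast
qed

lemma stably_computes_g: "stably_computes species reactions d (\<lambda>i. i + 2) 0 1 g"
proof -
  have "\<exists>D. reachable reactions C D \<and> stable reactions 0 D \<and> D 0 = g x"
    if "x \<in> vecs d" and "reachable reactions (initial x) C" for x C
  proof (intro exI conjI)
    show "reachable reactions C (progress x x)"
      using reachable_complete[OF that] .
    show "stable reactions 0 (progress x x)"
      by (rule stable_if_terminal[OF progress_complete_terminal])
    show "progress x x 0 = g x"
      by (simp add: progress_def)
  qed
  moreover have "(\<lambda>i. i + 2) ` {..<d} \<subseteq> species" "0 \<in> species" "1 \<in> species"
    by (auto simp: species_def)
  ultimately show ?thesis
    using crn_wf_reactions unfolding stably_computes_def init_config_eq_initial
    by (simp add: inj_on_def image_iff)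
qed

end

theorem lemma14:
  fixes d :: nat and g :: "(nat \<Rightarrow> nat) \<Rightarrow> nat"
  assumes "quilt_affine d g"
  shows "obliviously_computable d g"
proof -
  obtain p and grad :: "nat \<Rightarrow> rat" and B :: "(nat \<Rightarrow> nat) \<Rightarrow> rat" where
    mono: "\<forall>x\<in>vecs d. \<forall>y\<in>vecs d. x \<le> y \<longrightarrow> g x \<le> g y"
    and p: "0 < p"
    and g_eq: "\<forall>x\<in>vecs d. of_nat (g x) = (\<Sum>i<d. grad i * of_nat (x i)) + B (\<lambda>i. x i mod p)"
    using assms unfolding quilt_affine_def by (elim conjE exE) blast
  obtain code :: "(nat \<Rightarrow> nat) \<Rightarrow> nat" where "inj_on code (residue_vecs d p)"
    using finite_imp_inj_to_nat_seg[OF finite_residue_vecs] by blast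
  then interpret quilt_affine_crn d g p grad B code
    using mono p g_eq by unfold_locales auto
  show ?thesis
    unfolding obliviously_computable_def
    using output_oblivious_reactions stably_computes_g by (intro exI conjI)
qed

end
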